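(* Let $X$ be a set and $\tau$ a Hausdorff topology on $I(X)$ making it a topological inverse semigroup. Then the map $2^X\to(I(X),\tau)$, $A\mapsto 1_A$, is continuous if and only if the set of idempotents $\{1_A: A\subseteq X\}$ of $I(X)$ is $\tau$-compact.
   Context: $I(X)$ is the set of all bijections $f:A\to B$ with $A,B\subseteq X$ (including the empty map), with composition $\mathrm{dom}(f\circ g)=g^{-1}(\mathrm{dom}(f)\cap\mathrm{im}(g))$, $(f\circ g)(x)=f(g(x))$ and inverse $f^{-1}$. $1_A$ denotes the identity map on $A\subseteq X$; these are exactly the idempotents of $I(X)$. $2^X$ is the power set of $X$ with the product topology (identified with $\{0,1\}^X$). A topological inverse semigroup is one where multiplication and inversion are continuous. *)

theory Defs
  imports "HOL-Analysis.Analysis"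
begin

text \<open>The symmetric inverse monoid I(X): partial bijections between subsets of X,
  represented as partial maps (type 'a \<rightharpoonup> 'a) injective on their domain.\<close>
definition sym_inv :: "'a set \<Rightarrow> ('a \<rightharpoonup> 'a) set" where
  "sym_inv X = {f. inj_on f (dom f) \<and> dom f \<subseteq> X \<and> ran f \<subseteq> X}"

definition pcomp :: "('a \<rightharpoonup> 'a) \<Rightarrow> ('a \<rightharpoonup> 'a) \<Rightarrow> ('a \<rightharpoonup> 'a)" where
  "pcomp f g = f \<circ>\<^sub>m g"

definition pinv :: "('a \<rightharpoonup> 'a) \<Rightarrow> ('a \<rightharpoonup> 'a)" where
  "pinv f = (\<lambda>y. if y \<in> ran f then Some (THE x. f x = Some y) else None)"

definition pid :: "'a set \<Rightarrow> ('a \<rightharpoonup> 'a)" where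
  "pid A = (\<lambda>x. if x \<in> A then Some x else None)"

definition top_inv_semigroup_on :: "'a set \<Rightarrow> ('a \<rightharpoonup> 'a) topology \<Rightarrow> bool" where
  "top_inv_semigroup_on X \<tau> \<longleftrightarrow>
     topspace \<tau> = sym_inv X \<and>
     continuous_map (prod_topology \<tau> \<tau>) \<tau> (\<lambda>(f, g). pcomp f g) \<and>
     continuous_map \<tau> \<tau> pinv"

text \<open>The Cantor cube 2^X = {0,1}^X with the product topology; a point is a
  characteristic function X \<rightarrow> bool, corresponding to the subset {x \<in> X. g x}.\<close>
definition cantor_cube :: "'a set \<Rightarrow> ('a \<Rightarrow> bool) topology" where
  "cantor_cube X = product_topology (\<lambda>_. discrete_topology (UNIV :: bool set)) X"

end

theory Submission
  imports Defs
begin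

text \<open>The map \<open>A \<mapsto> 1\<^sub>A\<close> is a bijection from the compact Hausdorff cube \<open>2\<^sup>X\<close> onto the
  idempotents, so if it is continuous its image is compact. Conversely, its inverse
  \<open>e \<mapsto> dom e\<close> is continuous on the idempotents: \<open>x \<in> dom e\<close> holds iff right multiplication
  by the idempotent on \<open>{x}\<close> fixes that idempotent, and fails iff it yields the empty map,
  and both are closed conditions because right multiplication is continuous and points are
  closed. A continuous bijection from a compact space onto a Hausdorff space has a continuous
  inverse.\<close>

definition sym_inv_idempotents :: "'a set \<Rightarrow> ('a \<rightharpoonup> 'a) set" where
  "sym_inv_idempotents X = {pid A | A. A \<subseteq> X}"

definition dom_char :: "'a set \<Rightarrow> ('a \<rightharpoonup> 'a) \<Rightarrow> 'a \<Rightarrow> bool" where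
  "dom_char X e = restrict (\<lambda>x. x \<in> dom e) X"

lemma pid_in_sym_inv: "A \<subseteq> X \<Longrightarrow> pid A \<in> sym_inv X"
  unfolding sym_inv_def pid_def
  by (auto simp: inj_on_def dom_def ran_def split: if_splits)

lemma sym_inv_idempotents_subset: "sym_inv_idempotents X \<subseteq> sym_inv X"
  unfolding sym_inv_idempotents_def using pid_in_sym_inv by blast

lemma topspace_subtopology_sym_inv_idempotents:
  "top_inv_semigroup_on X \<tau> \<Longrightarrow>
     topspace (subtopology \<tau> (sym_inv_idempotents X)) = sym_inv_idempotents X"
  using sym_inv_idempotents_subset[of X] by (auto simp: top_inv_semigroup_on_def)

lemma pcomp_pid_pid: "pcomp (pid A) (pid B) = pid (A \<inter> B)"
  unfolding pcomp_def pid_def by (auto simp: fun_eq_iff map_comp_def)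

lemma pid_eq_pid_iff: "pid A = pid B \<longleftrightarrow> A = B"
  unfolding pid_def by (auto simp: fun_eq_iff split: if_splits)

lemma dom_pid [simp]: "dom (pid A) = A"
  by (auto simp: pid_def split: if_splits)

lemma pcomp_pid_singleton_eq_iff:
  "pcomp (pid A) (pid {x}) = pid (if b then {x} else {}) \<longleftrightarrow> (x \<in> A) = b"
  by (auto simp: pcomp_pid_pid pid_eq_pid_iff)

lemma topspace_cantor_cube: "topspace (cantor_cube X) = (\<Pi>\<^sub>E x\<in>X. UNIV)"
  by (simp add: cantor_cube_def)

lemma compact_space_cantor_cube: "compact_space (cantor_cube X)"
  by (simp add: cantor_cube_def compact_space_product_topology compact_space_discrete_topology)

lemma Hausdorff_space_cantor_cube: "Hausdorff_space (cantor_cube X)"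
  by (simp add: cantor_cube_def Hausdorff_space_product_topology)

lemma collect_dom_char_pid: "A \<subseteq> X \<Longrightarrow> {x \<in> X. dom_char X (pid A) x} = A"
  by (auto simp: dom_char_def)

lemma pid_dom_char_idempotent:
  "e \<in> sym_inv_idempotents X \<Longrightarrow> pid {x \<in> X. dom_char X e x} = e"
  unfolding sym_inv_idempotents_def by (auto simp: collect_dom_char_pid)

lemma pid_image_cantor_cube:
  "(\<lambda>g. pid {x \<in> X. g x}) ` topspace (cantor_cube X) = sym_inv_idempotents X"
proof
  show "(\<lambda>g. pid {x \<in> X. g x}) ` topspace (cantor_cube X) \<subseteq> sym_inv_idempotents X"
    unfolding sym_inv_idempotents_def by auto
  show "sym_inv_idempotents X \<subseteq> (\<lambda>g. pid {x \<in> X. g x}) ` topspace (cantor_cube X)"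
  proof
    fix e assume "e \<in> sym_inv_idempotents X"
    then have "e = pid {x \<in> X. dom_char X e x}"
      by (simp add: pid_dom_char_idempotent)
    moreover have "dom_char X e \<in> topspace (cantor_cube X)"
      by (simp add: dom_char_def topspace_cantor_cube)
    ultimately show "e \<in> (\<lambda>g. pid {x \<in> X. g x}) ` topspace (cantor_cube X)" by blast
  qed
qed

lemma dom_char_pid_cantor_cube:
  "g \<in> topspace (cantor_cube X) \<Longrightarrow> dom_char X (pid {x \<in> X. g x}) = g"
  by (auto simp: dom_char_def topspace_cantor_cube PiE_def extensional_def fun_eq_iff)

lemma continuous_map_discrete_boolI:
  fixes P :: "'a \<Rightarrow> bool"
  assumes "closedin X {x \<in> topspace X. P x}" and "closedin X {x \<in> topspace X. \<not> P x}"
  shows "continuous_map X (discrete_topology UNIV) P"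
  unfolding continuous_map_closedin
proof (intro conjI allI impI)
  fix C :: "bool set"
  have "{x \<in> topspace X. P x \<in> C} =
        (if True \<in> C then {x \<in> topspace X. P x} else {}) \<union>
        (if False \<in> C then {x \<in> topspace X. \<not> P x} else {})"
    by (cases "True \<in> C"; cases "False \<in> C") (auto, (metis (full_types))+)
  then show "closedin X {x \<in> topspace X. P x \<in> C}"
    using assms by (simp add: closedin_Un)
qed simp

lemma continuous_map_pcomp_right:
  assumes "top_inv_semigroup_on X \<tau>" and "c \<in> topspace \<tau>"
  shows "continuous_map \<tau> \<tau> (\<lambda>f. pcomp f c)"
proof -
  have "continuous_map \<tau> (prod_topology \<tau> \<tau>) (\<lambda>f. (f, c))"
    using assms(2) by (intro continuous_map_pairedI) auto
  then have "continuous_map \<tau> \<tau> ((\<lambda>(f, g). pcomp f g) \<circ> (\<lambda>f. (f, c)))"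
    using assms(1) unfolding top_inv_semigroup_on_def by (meson continuous_map_compose)
  then show ?thesis by (simp add: o_def)
qed

lemma closedin_pcomp_right_eq:
  assumes "Hausdorff_space \<tau>" and "top_inv_semigroup_on X \<tau>"
    and "c \<in> topspace \<tau>" and "d \<in> topspace \<tau>"
  shows "closedin \<tau> {f \<in> topspace \<tau>. pcomp f c = d}"
  using closedin_continuous_map_preimage[OF continuous_map_pcomp_right[OF assms(2,3)]
      closedin_Hausdorff_singleton[OF assms(1,4)]]
  by simp

lemma closedin_idempotents_dom_fiber:
  assumes "Hausdorff_space \<tau>" and "top_inv_semigroup_on X \<tau>" and "x \<in> X"
  shows "closedin (subtopology \<tau> (sym_inv_idempotents X))
           {e \<in> sym_inv_idempotents X. (x \<in> dom e) = b}"
proof -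
  let ?E = "sym_inv_idempotents X"
  define d where "d = pid (if b then {x} else {})"
  have space: "topspace \<tau> = sym_inv X"
    using assms(2) by (simp add: top_inv_semigroup_on_def)
  have fiber: "pcomp e (pid {x}) = d \<longleftrightarrow> (x \<in> dom e) = b" if e: "e \<in> ?E" for e
  proof -
    obtain A where "e = pid A"
      using e unfolding sym_inv_idempotents_def by blast
    then show ?thesis
      unfolding d_def by (simp only: pcomp_pid_singleton_eq_iff dom_pid)
  qed
  have "pid {x} \<in> topspace \<tau>" and "d \<in> topspace \<tau>"
    using assms(3) pid_in_sym_inv[of "{x}" X] pid_in_sym_inv[of "{}" X]
    by (auto simp: space d_def)
  then have "closedin (subtopology \<tau> ?E) (?E \<inter> {f \<in> topspace \<tau>. pcomp f (pid {x}) = d})"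
    by (intro closedin_subtopology_Int_closed closedin_pcomp_right_eq[OF assms(1,2)])
  moreover have "?E \<inter> {f \<in> topspace \<tau>. pcomp f (pid {x}) = d} = {e \<in> ?E. (x \<in> dom e) = b}"
    using fiber sym_inv_idempotents_subset[of X] by (auto simp: space)
  ultimately show ?thesis by simp
qed

lemma continuous_map_dom_char:
  assumes "Hausdorff_space \<tau>" and "top_inv_semigroup_on X \<tau>"
  shows "continuous_map (subtopology \<tau> (sym_inv_idempotents X)) (cantor_cube X) (dom_char X)"
  unfolding cantor_cube_def continuous_map_componentwise
proof (intro conjI ballI continuous_map_discrete_boolI)
  let ?E = "sym_inv_idempotents X"
  note space = topspace_subtopology_sym_inv_idempotents[OF assms(2)]
  fix x assume "x \<in> X"
  then show "closedin (subtopology \<tau> ?E) {e \<in> topspace (subtopology \<tau> ?E). dom_char X e x}"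
    and "closedin (subtopology \<tau> ?E) {e \<in> topspace (subtopology \<tau> ?E). \<not> dom_char X e x}"
    unfolding space
    using closedin_idempotents_dom_fiber[OF assms, of x True]
      closedin_idempotents_dom_fiber[OF assms, of x False]
    by (simp_all add: dom_char_def)
qed (auto simp: dom_char_def)

theorem theorem3p5:
  fixes X :: "'a set" and \<tau> :: "('a \<rightharpoonup> 'a) topology"
  assumes "Hausdorff_space \<tau>"
    and "top_inv_semigroup_on X \<tau>"
  shows "continuous_map (cantor_cube X) \<tau> (\<lambda>g. pid {x \<in> X. g x})
         \<longleftrightarrow> compactin \<tau> {pid A | A. A \<subseteq> X}"
  unfolding sym_inv_idempotents_def[symmetric]
proof
  assume "continuous_map (cantor_cube X) \<tau> (\<lambda>g. pid {x \<in> X. g x})"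
  with compact_space_cantor_cube
  have "compactin \<tau> ((\<lambda>g. pid {x \<in> X. g x}) ` topspace (cantor_cube X))"
    unfolding compact_space_def by (rule image_compactin)
  then show "compactin \<tau> (sym_inv_idempotents X)"
    by (simp only: pid_image_cantor_cube)
next
  let ?E = "sym_inv_idempotents X"
  assume "compactin \<tau> ?E"
  then have "continuous_map (subtopology (cantor_cube X) (topspace (cantor_cube X)))
               (subtopology \<tau> ?E) (\<lambda>g. pid {x \<in> X. g x})"
  proof (rule continuous_inverse_map[OF compact_space_subtopology Hausdorff_space_cantor_cube
        continuous_map_dom_char[OF assms]])
    note space = topspace_subtopology_sym_inv_idempotents[OF assms(2)]
    show "pid {x \<in> X. dom_char X e x} = e" if "e \<in> topspace (subtopology \<tau> ?E)" for e
      using that unfolding space by (rule pid_dom_char_idempotent)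
    show "topspace (cantor_cube X) \<subseteq> dom_char X ` topspace (subtopology \<tau> ?E)"
      unfolding space
    proof
      fix g assume g: "g \<in> topspace (cantor_cube X)"
      then have "pid {x \<in> X. g x} \<in> ?E"
        unfolding pid_image_cantor_cube[of X, symmetric] by (rule imageI)
      then show "g \<in> dom_char X ` ?E"
        using dom_char_pid_cantor_cube[OF g] by (metis image_eqI)
    qed
  qed
  then show "continuous_map (cantor_cube X) \<tau> (\<lambda>g. pid {x \<in> X. g x})"
    by (simp add: continuous_map_into_fulltopology)
qed

end
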